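(* Let $G$ be an $(n,n,p_s,p_d)$-two-island network with groups $V_1,V_2$, and let the implicit opinions $x_i(t)$ and explicit opinions $y_i(t)$ evolve according to the dual opinions dynamics described in the context, with common bias parameter $b>0$, common resilience $\phi\in(0,1)$, and the symmetric initial condition $x_i(0)=x_0\in(\tfrac12,1)$, $y_i(0)=y_0\in[\tfrac12,x_0]$ for $i\in V_1$ and $x_j(0)=1-x_0$, $y_j(0)=1-y_0$ for $j\in V_2$. Then for any two individuals $i,j$ in the same group, $x_i(t)=x_j(t)$ and $y_i(t)=y_j(t)$ for all $t\ge 0$. Moreover, for $i\in V_1$ and $j\in V_2$ and every $t>0$: $x_i(t)+x_j(t)=y_i(t)+y_j(t)=1$, $x_i(t)>y_i(t)>\tfrac12$, and $x_j(t)<y_j(t)<\tfrac12$.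
   Context: Let $n\ge 1$ and $p_s,p_d\in(0,1)$ with $p_s>p_d$ and $np_s,np_d$ positive integers. An $(n,n,p_s,p_d)$-two-island network is an undirected graph (no self-loops) with vertex set $V=V_1\cup V_2$, $V_1\cap V_2=\emptyset$, $|V_1|=|V_2|=n$, such that each node of $V_1$ has exactly $np_s$ neighbours in $V_1$ and $np_d$ neighbours in $V_2$, and each node of $V_2$ has exactly $np_s$ neighbours in $V_2$ and $np_d$ neighbours in $V_1$. Its degree of homophily is $h_G=p_s/p_d>1$. Let $w_{ij}\in\{0,1\}$ be the adjacency matrix, $N_i$ the set of neighbours of $i$, and $d_i=\sum_{j\in N_i}w_{ij}$. Dual opinions dynamics: each individual $i\in V$ has an implicit opinion $x_i(t)\in[0,1]$ and an explicit opinion $y_i(t)\in[0,1]$, $t=0,1,2,\dots$, updated by $$x_i(t+1)=\frac{x_i(t)^{b}s_i(t)}{x_i(t)^{b}s_i(t)+(1-x_i(t))^{b}(d_i-s_i(t))},\qquad y_i(t+1)=\phi\, x_i(t+1)+(1-\phi)\hat y_{i,avg}(t),$$ where $s_i(t)=\sum_{j\in N_i}w_{ij}y_j(t)$ and $\hat y_{i,avg}(t)=\sum_{j\in N_i}\frac{w_{ij}}{d_i}y_j(t)$. *)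

theory Defs
  imports Complex_Main
begin

text \<open>Undirected simple graph on vertex set V1 \<union> V2 given by an adjacency
relation E (w_ij = 1 iff E i j).\<close>

definition nbrs :: "('a \<Rightarrow> 'a \<Rightarrow> bool) \<Rightarrow> 'a set \<Rightarrow> 'a \<Rightarrow> 'a set" where
  "nbrs E V i = {j \<in> V. E i j}"

definition two_island_network ::
  "nat \<Rightarrow> real \<Rightarrow> real \<Rightarrow> 'a set \<Rightarrow> 'a set \<Rightarrow> ('a \<Rightarrow> 'a \<Rightarrow> bool) \<Rightarrow> bool" where
  "two_island_network n ps pd V1 V2 E \<longleftrightarrow>
     n \<ge> 1 \<and> 0 < pd \<and> pd < ps \<and> ps < 1 \<and>
     (\<exists>k::nat. k > 0 \<and> real n * ps = real k) \<and>
     (\<exists>k::nat. k > 0 \<and> real n * pd = real k) \<and>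
     finite V1 \<and> finite V2 \<and> V1 \<inter> V2 = {} \<and> card V1 = n \<and> card V2 = n \<and>
     (\<forall>i j. E i j \<longrightarrow> i \<in> V1 \<union> V2 \<and> j \<in> V1 \<union> V2) \<and>
     (\<forall>i j. E i j \<longrightarrow> E j i) \<and>
     (\<forall>i. \<not> E i i) \<and>
     (\<forall>i\<in>V1. real (card (nbrs E V1 i)) = real n * ps \<and>
               real (card (nbrs E V2 i)) = real n * pd) \<and>
     (\<forall>i\<in>V2. real (card (nbrs E V2 i)) = real n * ps \<and>
               real (card (nbrs E V1 i)) = real n * pd)"

definition dual_opinions_dynamics ::
  "real \<Rightarrow> real \<Rightarrow> 'a set \<Rightarrow> ('a \<Rightarrow> 'a \<Rightarrow> bool) \<Rightarrow>
   (nat \<Rightarrow> 'a \<Rightarrow> real) \<Rightarrow> (nat \<Rightarrow> 'a \<Rightarrow> real) \<Rightarrow> bool" where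
  "dual_opinions_dynamics b \<phi> V E x y \<longleftrightarrow>
     (\<forall>t. \<forall>i\<in>V.
        (let d = real (card (nbrs E V i));
             s = (\<Sum>j\<in>nbrs E V i. y t j);
             yavg = (\<Sum>j\<in>nbrs E V i. y t j / d)
         in x (Suc t) i = (x t i powr b * s) /
                            (x t i powr b * s + (1 - x t i) powr b * (d - s))
          \<and> y (Suc t) i = \<phi> * x (Suc t) i + (1 - \<phi>) * yavg))"

end

theory Submission
  imports Defs
begin

text \<open>The two islands stay internally consensual and mirror each other
(island 2 holds \<open>1 - X\<close>, \<open>1 - Y\<close> when island 1 holds \<open>X\<close>, \<open>Y\<close>), so the dynamics
reduces to a map on the pair \<open>(X, Y)\<close>. While \<open>Y \<ge> 1/2\<close>, a node of island 1 sees
a share \<open>s/(s + e) \<ge> 1/2\<close> of explicit agreement, because homophily weights its own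
island more; the biased update pushes the implicit opinion strictly above that share
whenever \<open>X > 1/2\<close>, and the new explicit opinion is a proper convex combination of
the two, hence lies strictly between \<open>1/2\<close> and the new implicit opinion.\<close>

text \<open>In both updates \<open>s\<close> is the explicit support \<open>s\<^sub>i(t)\<close> and \<open>e\<close> the
opposition \<open>d\<^sub>i - s\<^sub>i(t)\<close> seen by a node.\<close>

definition implicit_update :: "real \<Rightarrow> real \<Rightarrow> real \<Rightarrow> real \<Rightarrow> real" where
  "implicit_update b x s e = x powr b * s / (x powr b * s + (1 - x) powr b * e)"

definition explicit_update :: "real \<Rightarrow> real \<Rightarrow> real \<Rightarrow> real \<Rightarrow> real" where
  "explicit_update \<phi> x' s e = \<phi> * x' + (1 - \<phi>) * (s / (s + e))"

definition island_support :: "real \<Rightarrow> real \<Rightarrow> real \<Rightarrow> real" where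
  "island_support A C u = A * u + C * (1 - u)"

definition mirror_profile :: "'a set \<Rightarrow> 'a set \<Rightarrow> ('a \<Rightarrow> real) \<Rightarrow> real \<Rightarrow> bool" where
  "mirror_profile V1 V2 f u \<longleftrightarrow> (\<forall>i\<in>V1. f i = u) \<and> (\<forall>j\<in>V2. f j = 1 - u)"

lemma implicit_update_swap:
  assumes "0 < x" "x < 1" "0 < s" "0 < e"
  shows "implicit_update b (1 - x) e s = 1 - implicit_update b x s e"
proof -
  have "0 < x powr b * s + (1 - x) powr b * e"
    using assms by (intro add_pos_pos) simp_all
  then show ?thesis
    unfolding implicit_update_def by (simp add: field_simps)
qed

lemma implicit_update_less_one:
  assumes "0 < x" "x < 1" "0 < s" "0 < e"
  shows "implicit_update b x s e < 1"
proof -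
  have "0 < (1 - x) powr b * e" "0 < x powr b * s"
    using assms by simp_all
  then show ?thesis
    unfolding implicit_update_def by (simp add: divide_simps)
qed

lemma implicit_update_gt_share:
  assumes "0 < b" "1/2 < x" "x < 1" "0 < s" "0 < e"
  shows "s / (s + e) < implicit_update b x s e"
proof -
  define P where "P = x powr b"
  define Q where "Q = (1 - x) powr b"
  have "0 < Q" "Q < P"
    using assms unfolding P_def Q_def by (auto intro: powr_less_mono2)
  then have "s * (Q * e) < s * (P * e)"
    using assms by simp
  then have "s * (P * s + Q * e) < P * s * (s + e)"
    by (simp add: algebra_simps)
  moreover have "0 < P * s + Q * e" "0 < s + e"
    using \<open>0 < Q\<close> \<open>Q < P\<close> assms by (auto intro: add_pos_pos)
  ultimately show ?thesis
    unfolding implicit_update_def P_def[symmetric] Q_def[symmetric]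
    by (simp add: divide_simps mult.commute)
qed

lemma explicit_update_swap:
  assumes "s + e \<noteq> 0"
  shows "explicit_update \<phi> (1 - x') e s = 1 - explicit_update \<phi> x' s e"
  using assms unfolding explicit_update_def by (simp add: field_simps)

lemma explicit_update_strictly_between:
  assumes "0 < \<phi>" "\<phi> < 1" "1/2 \<le> s / (s + e)" "s / (s + e) < x'"
  shows "1/2 < explicit_update \<phi> x' s e" and "explicit_update \<phi> x' s e < x'"
proof -
  define r where "r = s / (s + e)"
  have "\<phi> * (1/2) < \<phi> * x'" "(1 - \<phi>) * (1/2) \<le> (1 - \<phi>) * r" "(1 - \<phi>) * r < (1 - \<phi>) * x'"
    using assms unfolding r_def[symmetric] by simp_all
  then show "1/2 < explicit_update \<phi> x' s e" and "explicit_update \<phi> x' s e < x'"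
    unfolding explicit_update_def r_def[symmetric] by (simp_all add: ring_distribs)
qed

lemma island_support_opposite_bounds:
  assumes "0 < C" "C < A" "1/2 \<le> u" "u \<le> 1"
  shows "0 < island_support A C (1 - u)" and "island_support A C (1 - u) \<le> island_support A C u"
proof -
  show "0 < island_support A C (1 - u)"
    using assms unfolding island_support_def by (intro add_nonneg_pos) simp_all
  have "island_support A C u - island_support A C (1 - u) = (A - C) * (2 * u - 1)"
    unfolding island_support_def by (simp add: algebra_simps)
  moreover have "0 \<le> (A - C) * (2 * u - 1)"
    using assms by simp
  ultimately show "island_support A C (1 - u) \<le> island_support A C u"
    by linarith
qed

lemma dual_opinions_dynamics_step:
  assumes dyn: "dual_opinions_dynamics b \<phi> V E x y" and i: "i \<in> V"
    and sum: "(\<Sum>j\<in>nbrs E V i. y t j) = s"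
    and deg: "real (card (nbrs E V i)) = s + e"
  shows "x (Suc t) i = implicit_update b (x t i) s e"
    and "y (Suc t) i = explicit_update \<phi> (x (Suc t) i) s e"
proof -
  have avg: "(\<Sum>j\<in>nbrs E V i. y t j / (s + e)) = s / (s + e)"
    using sum by (simp add: sum_divide_distrib[symmetric])
  have "sum (y t) (nbrs E V i) = s"
    using sum by simp
  with dyn i avg deg show "x (Suc t) i = implicit_update b (x t i) s e"
    and "y (Suc t) i = explicit_update \<phi> (x (Suc t) i) s e"
    unfolding dual_opinions_dynamics_def Let_def implicit_update_def explicit_update_def by auto
qed

lemma nbrs_Un_disjoint:
  assumes "finite V1" "finite V2" "V1 \<inter> V2 = {}"
  shows "(\<Sum>j\<in>nbrs E (V1 \<union> V2) i. f j) = (\<Sum>j\<in>nbrs E V1 i. f j) + (\<Sum>j\<in>nbrs E V2 i. f j)"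
    and "card (nbrs E (V1 \<union> V2) i) = card (nbrs E V1 i) + card (nbrs E V2 i)"
proof -
  have "nbrs E (V1 \<union> V2) i = nbrs E V1 i \<union> nbrs E V2 i"
    "finite (nbrs E V1 i)" "finite (nbrs E V2 i)" "nbrs E V1 i \<inter> nbrs E V2 i = {}"
    using assms by (auto simp: nbrs_def)
  then show "(\<Sum>j\<in>nbrs E (V1 \<union> V2) i. f j) = (\<Sum>j\<in>nbrs E V1 i. f j) + (\<Sum>j\<in>nbrs E V2 i. f j)"
    and "card (nbrs E (V1 \<union> V2) i) = card (nbrs E V1 i) + card (nbrs E V2 i)"
    by (simp_all add: sum.union_disjoint card_Un_disjoint)
qed

lemma two_island_degree:
  assumes G: "two_island_network n ps pd V1 V2 E" and i: "i \<in> V1 \<union> V2"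
  shows "real (card (nbrs E (V1 \<union> V2) i)) = n * ps + n * pd"
  using G i nbrs_Un_disjoint(2)[where E = E and i = i] unfolding two_island_network_def by auto

lemma two_island_nbrs_sum_mirror:
  assumes G: "two_island_network n ps pd V1 V2 E" and f: "mirror_profile V1 V2 f u"
  shows "i \<in> V1 \<Longrightarrow> (\<Sum>j\<in>nbrs E (V1 \<union> V2) i. f j) = island_support (n * ps) (n * pd) u"
    and "i \<in> V2 \<Longrightarrow> (\<Sum>j\<in>nbrs E (V1 \<union> V2) i. f j) = island_support (n * ps) (n * pd) (1 - u)"
proof -
  have "(\<Sum>j\<in>nbrs E V1 i. f j) = card (nbrs E V1 i) * u"
    "(\<Sum>j\<in>nbrs E V2 i. f j) = card (nbrs E V2 i) * (1 - u)"
    using f by (simp_all add: mirror_profile_def nbrs_def)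
  then have "(\<Sum>j\<in>nbrs E (V1 \<union> V2) i. f j) = card (nbrs E V1 i) * u + card (nbrs E V2 i) * (1 - u)"
    using G nbrs_Un_disjoint(1)[where E = E and i = i and f = f] unfolding two_island_network_def by simp
  then show "i \<in> V1 \<Longrightarrow> (\<Sum>j\<in>nbrs E (V1 \<union> V2) i. f j) = island_support (n * ps) (n * pd) u"
    and "i \<in> V2 \<Longrightarrow> (\<Sum>j\<in>nbrs E (V1 \<union> V2) i. f j) = island_support (n * ps) (n * pd) (1 - u)"
    using G unfolding two_island_network_def island_support_def by (auto simp: algebra_simps)
qed

lemma two_island_mirror_step:
  assumes G: "two_island_network n ps pd V1 V2 E" and b: "0 < b" and phi: "0 < \<phi>" "\<phi> < 1"
    and dyn: "dual_opinions_dynamics b \<phi> (V1 \<union> V2) E x y"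
    and xt: "mirror_profile V1 V2 (x t) X" and yt: "mirror_profile V1 V2 (y t) Y"
    and X: "1/2 < X" "X < 1" and Y: "1/2 \<le> Y" "Y \<le> 1"
  obtains X' Y' where "mirror_profile V1 V2 (x (Suc t)) X'" "mirror_profile V1 V2 (y (Suc t)) Y'"
    and "1/2 < Y'" "Y' < X'" "X' < 1"
proof -
  define s where "s = island_support (n * ps) (n * pd) Y"
  define e where "e = island_support (n * ps) (n * pd) (1 - Y)"
  have "0 < n * pd" "n * pd < n * ps"
    using G by (auto simp: two_island_network_def)
  with Y have "0 < e" "e \<le> s"
    unfolding s_def e_def by (simp_all add: island_support_opposite_bounds)
  define X' where "X' = implicit_update b X s e"
  define Y' where "Y' = explicit_update \<phi> X' s e"
  have "1/2 \<le> s / (s + e)"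
    using \<open>0 < e\<close> \<open>e \<le> s\<close> by (simp add: divide_simps)
  moreover have "s / (s + e) < X'" "X' < 1"
    using \<open>0 < e\<close> \<open>e \<le> s\<close> b X unfolding X'_def
    by (simp_all add: implicit_update_gt_share implicit_update_less_one)
  ultimately have "1/2 < Y'" "Y' < X'"
    unfolding Y'_def using explicit_update_strictly_between[OF phi] by blast+
  have deg: "real (card (nbrs E (V1 \<union> V2) i)) = s + e" if "i \<in> V1 \<union> V2" for i
    using two_island_degree[OF G that] unfolding s_def e_def island_support_def
    by (simp add: algebra_simps)
  have "x (Suc t) i = X' \<and> y (Suc t) i = Y'" if "i \<in> V1" for i
    using dual_opinions_dynamics_step[OF dyn _ two_island_nbrs_sum_mirror(1)[OF G yt that, folded s_def] deg]
      xt that unfolding X'_def Y'_def by (simp add: mirror_profile_def)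
  moreover have "x (Suc t) j = 1 - X' \<and> y (Suc t) j = 1 - Y'" if "j \<in> V2" for j
  proof -
    have "real (card (nbrs E (V1 \<union> V2) j)) = e + s"
      using deg that by simp
    with that have "x (Suc t) j = implicit_update b (1 - X) e s"
      and "y (Suc t) j = explicit_update \<phi> (x (Suc t) j) e s"
      using dual_opinions_dynamics_step[OF dyn _ two_island_nbrs_sum_mirror(2)[OF G yt that]] xt
      unfolding e_def by (auto simp: mirror_profile_def)
    then show ?thesis
      using \<open>0 < e\<close> \<open>e \<le> s\<close> X unfolding X'_def Y'_def
      by (simp add: implicit_update_swap explicit_update_swap)
  qed
  ultimately have "mirror_profile V1 V2 (x (Suc t)) X'" "mirror_profile V1 V2 (y (Suc t)) Y'"
    by (simp_all add: mirror_profile_def)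
  then show ?thesis
    using \<open>1/2 < Y'\<close> \<open>Y' < X'\<close> \<open>X' < 1\<close> by (rule that)
qed

lemma two_island_mirror_invariant:
  assumes G: "two_island_network n ps pd V1 V2 E" and b: "0 < b" and phi: "0 < \<phi>" "\<phi> < 1"
    and dyn: "dual_opinions_dynamics b \<phi> (V1 \<union> V2) E x y"
    and init: "mirror_profile V1 V2 (x 0) x0" "mirror_profile V1 V2 (y 0) y0"
    and x0: "1/2 < x0" "x0 < 1" and y0: "1/2 \<le> y0" "y0 \<le> x0"
  shows "\<exists>X Y. mirror_profile V1 V2 (x t) X \<and> mirror_profile V1 V2 (y t) Y \<and>
    1/2 < X \<and> X < 1 \<and> 1/2 \<le> Y \<and> Y \<le> X \<and> (0 < t \<longrightarrow> 1/2 < Y \<and> Y < X)"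
proof (induction t)
  case 0
  then show ?case
    using init x0 y0 by blast
next
  case (Suc t)
  then obtain X Y where xt: "mirror_profile V1 V2 (x t) X" and yt: "mirror_profile V1 V2 (y t) Y"
    and X: "1/2 < X" "X < 1" and Y: "1/2 \<le> Y" "Y \<le> X"
    by blast
  then have "Y \<le> 1"
    by linarith
  with Y obtain X' Y' where "mirror_profile V1 V2 (x (Suc t)) X'" "mirror_profile V1 V2 (y (Suc t)) Y'"
    and "1/2 < Y'" "Y' < X'" "X' < 1"
    using two_island_mirror_step[OF G b phi dyn xt yt X] by blast
  then show ?case
    by (intro exI[of _ X'] exI[of _ Y']) simp
qed

theorem theorem1:
  fixes n :: nat and ps pd b \<phi> x0 y0 :: real
    and V1 V2 :: "'a set" and E :: "'a \<Rightarrow> 'a \<Rightarrow> bool"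
    and x y :: "nat \<Rightarrow> 'a \<Rightarrow> real"
  assumes G: "two_island_network n ps pd V1 V2 E"
    and b: "b > 0"
    and phi: "0 < \<phi>" "\<phi> < 1"
    and x0: "1/2 < x0" "x0 < 1"
    and y0: "1/2 \<le> y0" "y0 \<le> x0"
    and init1: "\<forall>i\<in>V1. x 0 i = x0 \<and> y 0 i = y0"
    and init2: "\<forall>j\<in>V2. x 0 j = 1 - x0 \<and> y 0 j = 1 - y0"
    and dyn: "dual_opinions_dynamics b \<phi> (V1 \<union> V2) E x y"
  shows "(\<forall>t. \<forall>i\<in>V1. \<forall>j\<in>V1. x t i = x t j \<and> y t i = y t j) \<and>
         (\<forall>t. \<forall>i\<in>V2. \<forall>j\<in>V2. x t i = x t j \<and> y t i = y t j) \<and>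
         (\<forall>t>0. \<forall>i\<in>V1. \<forall>j\<in>V2.
             x t i + x t j = 1 \<and> y t i + y t j = 1 \<and>
             x t i > y t i \<and> y t i > 1/2 \<and>
             x t j < y t j \<and> y t j < 1/2)"
proof -
  have "mirror_profile V1 V2 (x 0) x0" "mirror_profile V1 V2 (y 0) y0"
    using init1 init2 by (simp_all add: mirror_profile_def)
  note invariant = two_island_mirror_invariant[OF G b phi dyn this x0 y0]
  have "(\<forall>i\<in>V1. \<forall>j\<in>V1. x t i = x t j \<and> y t i = y t j) \<and>
      (\<forall>i\<in>V2. \<forall>j\<in>V2. x t i = x t j \<and> y t i = y t j) \<and>
      (0 < t \<longrightarrow> (\<forall>i\<in>V1. \<forall>j\<in>V2. x t i + x t j = 1 \<and> y t i + y t j = 1 \<and>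
         x t i > y t i \<and> y t i > 1/2 \<and> x t j < y t j \<and> y t j < 1/2))" for t
  proof -
    obtain X Y where "mirror_profile V1 V2 (x t) X" "mirror_profile V1 V2 (y t) Y"
      and "0 < t \<longrightarrow> 1/2 < Y \<and> Y < X"
      using invariant by blast
    then show ?thesis
      by (auto simp: mirror_profile_def)
  qed
  then show ?thesis
    by blast
qed

end
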